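(* Let $T>0$ and let $M,N\ge 1$ be integers. Let $a\in L^2(\mathbb R)$ be supported in $[-T_a/2,T_a/2]$ for some $T_a>0$ (no further restriction on $T_a$), and suppose $a$ is square-root Nyquist for the interval $T/M$ with energy $1/N$, i.e. $$\int_{\mathbb R} a(t)\,a^*\!\left(t-k\tfrac{T}{M}\right)dt=\tfrac1N\,\delta(k)\quad\text{for all }k\in\mathbb Z.$$ Define the DDOP $u(t)=\sum_{\dot n=0}^{N-1}a(t-\dot nT)$, let $D=\lceil T_a/T\rceil$, and define its cyclically extended version $$u_c(t)=\sum_{n=-D}^{N-1+D}a(t-nT).$$ Then $$\mathcal A_{u_c,u}\!\left(m\tfrac{T}{M},\,n\tfrac{1}{NT}\right)=\delta(m)\,\delta(n)$$ for all integers $m,n$ with $|m|\le M-1$ and $|n|\le N-1$.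
   Context: For $g,\gamma\in L^2(\mathbb R)$, the (cross-)ambiguity function is $\mathcal A_{g,\gamma}(\tau,\nu)=\int_{\mathbb R} g(t)\,\gamma^*(t-\tau)\,e^{-j2\pi\nu(t-\tau)}\,dt$. Here $\delta(\cdot)$ denotes the Kronecker delta on integers, $j=\sqrt{-1}$, and $\lceil\cdot\rceil$ is the ceiling function. *)

theory Defs
  imports "HOL-Analysis.Analysis"
begin

definition ambiguity :: "(real \<Rightarrow> complex) \<Rightarrow> (real \<Rightarrow> complex) \<Rightarrow> real \<Rightarrow> real \<Rightarrow> complex" where
  "ambiguity g \<gamma> \<tau> \<nu> =
     (LINT t|lborel. g t * cnj (\<gamma> (t - \<tau>)) * exp (- \<i> * complex_of_real (2 * pi * \<nu> * (t - \<tau>))))"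

definition kdelta :: "int \<Rightarrow> complex" where
  "kdelta k = (if k = 0 then 1 else 0)"

definition square_integrable :: "(real \<Rightarrow> complex) \<Rightarrow> bool" where
  "square_integrable f \<longleftrightarrow> f \<in> borel_measurable lborel \<and> integrable lborel (\<lambda>t. (cmod (f t))\<^sup>2)"

definition ddop :: "(real \<Rightarrow> complex) \<Rightarrow> real \<Rightarrow> nat \<Rightarrow> real \<Rightarrow> complex" where
  "ddop a T N t = (\<Sum>n<N. a (t - real n * T))"

definition ddop_cyc :: "(real \<Rightarrow> complex) \<Rightarrow> real \<Rightarrow> real \<Rightarrow> nat \<Rightarrow> real \<Rightarrow> complex" where
  "ddop_cyc a Ta T N t =
     (let D = \<lceil>Ta / T\<rceil> in (\<Sum>n\<in>{-D .. int N - 1 + D}. a (t - real_of_int n * T)))"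

end

theory Submission
  imports Defs
begin

text \<open>
  Expanding both pulse trains writes the ambiguity function of (u_c, u) as a double sum over
  the pulses l of u_c and j of u; the substitution t = s + l T turns each term into the phase
  exp(-j 2\<pi> \<nu> j T) times the auto-ambiguity of a at delay \<tau> - (l - j) T.  Since a lives on
  an interval of length T_a \<le> D T and |\<tau>| < T, only |l - j| \<le> D contributes, and the D extra
  pulses on each side of u_c make the window of surviving l the same for every j.  Hence the
  ambiguity factors into (sum over |k| \<le> D of the auto-ambiguity at \<tau> - k T) times (sum over
  j < N of the phases).  At \<nu> = n/(NT) the second factor is a sum of N-th roots of unity, equal
  to N \<delta>(n); at \<nu> = 0 the first factor samples the autocorrelation of a at the multiples
  (m - k M) T/M of T/M, and the Nyquist property keeps only k = 0, leaving \<delta>(m)/N.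
\<close>

lemma square_integrable_shift:
  assumes "square_integrable g"
  shows "square_integrable (\<lambda>t. g (t - p))"
proof -
  have "integrable lborel (\<lambda>t. (cmod (g t))\<^sup>2)" and "g \<in> borel_measurable lborel"
    using assms by (simp_all add: square_integrable_def)
  then show ?thesis
    using lborel_integrable_real_affine[of "\<lambda>t. (cmod (g t))\<^sup>2" 1 "- p"]
    unfolding square_integrable_def by simp measurable
qed

lemma integrable_ambiguity_integrand:
  assumes g: "square_integrable g" and \<gamma>: "square_integrable \<gamma>"
  shows "integrable lborel
    (\<lambda>t. g t * cnj (\<gamma> (t - \<tau>)) * exp (- \<i> * complex_of_real (2 * pi * \<nu> * (t - \<tau>))))"
    (is "integrable lborel ?f")
proof (rule Bochner_Integration.integrable_bound)
  let ?b = "\<lambda>t. ((cmod (g t))\<^sup>2 + (cmod (\<gamma> (t - \<tau>)))\<^sup>2) / 2"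
  show "integrable lborel ?b"
    using g square_integrable_shift[OF \<gamma>] by (simp add: square_integrable_def)
  have [measurable]: "g \<in> borel_measurable borel" "\<gamma> \<in> borel_measurable borel"
    using g \<gamma> by (simp_all add: square_integrable_def)
  have [measurable]: "cnj \<in> borel_measurable borel" "complex_of_real \<in> borel_measurable borel"
    by (intro borel_measurable_continuous_onI continuous_intros)+
  show "?f \<in> borel_measurable lborel"
    by measurable
  have "norm (?f t) \<le> norm (?b t)" for t
    using sum_squares_bound[of "cmod (g t)" "cmod (\<gamma> (t - \<tau>))"]
    by (simp add: norm_mult norm_exp_eq_Re)
  then show "AE t in lborel. norm (?f t) \<le> norm (?b t)"
    by simp
qed

lemma ambiguity_shift:
  "ambiguity (\<lambda>t. g (t - p)) (\<lambda>t. \<gamma> (t - q)) \<tau> \<nu>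
     = exp (- \<i> * complex_of_real (2 * pi * \<nu> * q)) * ambiguity g \<gamma> (\<tau> + q - p) \<nu>"
proof -
  have integrand: "g (p + 1 * s - p) * cnj (\<gamma> (p + 1 * s - \<tau> - q))
          * exp (- \<i> * complex_of_real (2 * pi * \<nu> * (p + 1 * s - \<tau>)))
      = exp (- \<i> * complex_of_real (2 * pi * \<nu> * q)) * (g s * cnj (\<gamma> (s - (\<tau> + q - p)))
          * exp (- \<i> * complex_of_real (2 * pi * \<nu> * (s - (\<tau> + q - p)))))" for s
  proof -
    have "- \<i> * complex_of_real (2 * pi * \<nu> * (p + 1 * s - \<tau>))
        = - \<i> * complex_of_real (2 * pi * \<nu> * q)
          + - \<i> * complex_of_real (2 * pi * \<nu> * (s - (\<tau> + q - p)))"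
      by (simp add: algebra_simps)
    moreover have "p + 1 * s - \<tau> - q = s - (\<tau> + q - p)" and "p + 1 * s - p = s"
      by simp_all
    ultimately show ?thesis
      by (simp only: exp_add mult_ac)
  qed
  have "ambiguity (\<lambda>t. g (t - p)) (\<lambda>t. \<gamma> (t - q)) \<tau> \<nu>
      = (LINT s|lborel. g (p + 1 * s - p) * cnj (\<gamma> (p + 1 * s - \<tau> - q))
          * exp (- \<i> * complex_of_real (2 * pi * \<nu> * (p + 1 * s - \<tau>))))"
    unfolding ambiguity_def
    by (subst lborel_integral_real_affine[where c = 1 and t = p])
      (simp_all only: abs_one scaleR_one one_neq_zero not_False_eq_True)
  also have "\<dots> = exp (- \<i> * complex_of_real (2 * pi * \<nu> * q)) * ambiguity g \<gamma> (\<tau> + q - p) \<nu>"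
    unfolding integrand ambiguity_def by (rule integral_mult_right_zero)
  finally show ?thesis .
qed

lemma ambiguity_sum:
  assumes "\<And>l. l \<in> L \<Longrightarrow> square_integrable (f l)"
    and "\<And>j. j \<in> J \<Longrightarrow> square_integrable (h j)"
  shows "ambiguity (\<lambda>t. \<Sum>l\<in>L. f l t) (\<lambda>t. \<Sum>j\<in>J. h j t) \<tau> \<nu>
      = (\<Sum>j\<in>J. \<Sum>l\<in>L. ambiguity (f l) (h j) \<tau> \<nu>)"
proof -
  let ?E = "\<lambda>t. exp (- \<i> * complex_of_real (2 * pi * \<nu> * (t - \<tau>)))"
  have integrable: "integrable lborel (\<lambda>t. f l t * cnj (h j (t - \<tau>)) * ?E t)"
    if "l \<in> L" and "j \<in> J" for l j
    using that assms by (intro integrable_ambiguity_integrand)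
  have "(\<Sum>l\<in>L. f l t) * cnj (\<Sum>j\<in>J. h j (t - \<tau>)) * ?E t
      = (\<Sum>j\<in>J. \<Sum>l\<in>L. f l t * cnj (h j (t - \<tau>)) * ?E t)" for t
    by (simp only: cnj_sum sum_distrib_left sum_distrib_right)
  then have "ambiguity (\<lambda>t. \<Sum>l\<in>L. f l t) (\<lambda>t. \<Sum>j\<in>J. h j t) \<tau> \<nu>
      = (LINT t|lborel. (\<Sum>j\<in>J. \<Sum>l\<in>L. f l t * cnj (h j (t - \<tau>)) * ?E t))"
    unfolding ambiguity_def by (simp only:)
  also have "\<dots> = (\<Sum>j\<in>J. LINT t|lborel. (\<Sum>l\<in>L. f l t * cnj (h j (t - \<tau>)) * ?E t))"
    by (rule Bochner_Integration.integral_sum) (rule Bochner_Integration.integrable_sum, rule integrable)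
  also have "\<dots> = (\<Sum>j\<in>J. \<Sum>l\<in>L. ambiguity (f l) (h j) \<tau> \<nu>)"
    unfolding ambiguity_def by (intro sum.cong refl) (rule Bochner_Integration.integral_sum, rule integrable)
  finally show ?thesis .
qed

lemma ambiguity_zero_frequency:
  "ambiguity g \<gamma> \<tau> 0 = (LINT t|lborel. g t * cnj (\<gamma> (t - \<tau>)))"
  by (simp add: ambiguity_def)

lemma ambiguity_eq_0_if_supports_apart:
  assumes "\<And>t. \<bar>t\<bar> > R \<Longrightarrow> g t = 0" and "\<And>t. \<bar>t\<bar> > R \<Longrightarrow> \<gamma> t = 0"
    and "\<bar>\<tau>\<bar> > 2 * R"
  shows "ambiguity g \<gamma> \<tau> \<nu> = 0"
proof -
  have vanish: "g t * cnj (\<gamma> (t - \<tau>)) = 0" for t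
    using assms by (cases "\<bar>t\<bar> > R") auto
  have "(\<lambda>t. g t * cnj (\<gamma> (t - \<tau>)) * exp (- \<i> * complex_of_real (2 * pi * \<nu> * (t - \<tau>))))
      = (\<lambda>t. 0)"
    by (simp only: vanish mult_zero_left)
  then show ?thesis
    unfolding ambiguity_def by simp
qed

lemma sum_exp_roots_of_unity_eq_0:
  fixes n :: int
  assumes "\<not> int N dvd n"
  shows "(\<Sum>j<N. exp (- \<i> * complex_of_real (2 * pi * of_int n * real j / real N))) = 0"
proof (cases "N = 0")
  case False
  define w where "w = exp (- \<i> * complex_of_real (2 * pi * of_int n / real N))"
  have powers: "exp (- \<i> * complex_of_real (2 * pi * of_int n * real j / real N)) = w ^ j" for j
  proof -
    have "- \<i> * complex_of_real (2 * pi * of_int n * real j / real N)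
        = of_nat j * (- \<i> * complex_of_real (2 * pi * of_int n / real N))"
      by simp
    then show ?thesis
      unfolding w_def by (simp only: exp_of_nat_mult)
  qed
  have "w ^ N = exp (\<i> * (of_int (- n) * (of_real pi * 2)))"
    unfolding w_def exp_of_nat_mult[symmetric] using False by (simp add: field_simps)
  then have "w ^ N = 1"
    by (simp only: exp_2pi_1_int)
  moreover have "w \<noteq> 1"
  proof
    assume "w = 1"
    then obtain k :: int where "- (2 * pi * of_int n / real N) = of_int (2 * k) * pi"
      unfolding w_def exp_eq_1 by auto
    then have "pi * (- real_of_int n) = pi * (real_of_int k * real N)"
      using False by (simp add: field_simps)
    then have "- real_of_int n = real_of_int k * real N"
      using pi_neq_zero mult_left_cancel by blast
    then have "real_of_int (- n) = real_of_int (k * int N)"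
      by simp
    then have "- n = k * int N"
      by (simp only: of_int_eq_iff)
    then have "int N dvd n"
      by (metis dvd_minus_iff dvd_triv_right)
    with assms show False ..
  qed
  ultimately show ?thesis
    unfolding powers by (simp add: sum_gp_strict)
qed simp

lemma sum_exp_frequency_grid:
  fixes n :: int
  assumes "T \<noteq> 0" and "\<bar>n\<bar> < int N"
  shows "(\<Sum>j<N. exp (- \<i> * complex_of_real (2 * pi * (of_int n * (1 / (real N * T))) * (real j * T))))
      = of_nat N * kdelta n"
proof (cases "n = 0")
  case False
  have "2 * pi * (of_int n * (1 / (real N * T))) * (real j * T) = 2 * pi * of_int n * real j / real N" for j
    using \<open>T \<noteq> 0\<close> by simp
  then have "(\<Sum>j<N. exp (- \<i> * complex_of_real (2 * pi * (of_int n * (1 / (real N * T))) * (real j * T))))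
      = (\<Sum>j<N. exp (- \<i> * complex_of_real (2 * pi * of_int n * real j / real N)))"
    by (simp only:)
  also have "\<dots> = 0"
    by (rule sum_exp_roots_of_unity_eq_0) (use dvd_imp_le_int[OF False] assms(2) in force)
  finally show ?thesis
    using False by (simp add: kdelta_def)
qed (simp add: kdelta_def)

lemma sum_shifted_window:
  fixes F :: "int \<Rightarrow> 'b::comm_monoid_add"
  assumes "\<And>k. \<bar>k\<bar> > D \<Longrightarrow> F k = 0" and "lo \<le> j - D" and "j + D \<le> hi"
  shows "(\<Sum>l\<in>{lo..hi}. F (l - j)) = (\<Sum>k\<in>{-D..D}. F k)"
proof -
  have "(\<Sum>l\<in>{lo..hi}. F (l - j)) = (\<Sum>k\<in>{lo - j..hi - j}. F k)"
    by (rule sum.reindex_bij_witness[where i = "\<lambda>k. k + j" and j = "\<lambda>l. l - j"]) auto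
  also have "\<dots> = (\<Sum>k\<in>{-D..D}. F k)"
    by (rule sum.mono_neutral_right) (use assms in auto)
  finally show ?thesis .
qed

lemma sum_kdelta_multiples:
  fixes m :: int and M :: nat
  assumes "\<bar>m\<bar> < int M"
  shows "(\<Sum>k\<in>{-D..D}. kdelta (m - k * int M)) = (if 0 \<le> D then kdelta m else 0)"
proof -
  have "kdelta (m - k * int M) = (if k = 0 then kdelta m else 0)" for k
  proof (cases "k = 0")
    case False
    then have "int M \<le> \<bar>k * int M\<bar>"
      by (auto simp: abs_mult mult_le_cancel_right1)
    with assms show ?thesis
      by (auto simp: kdelta_def)
  qed simp
  then show ?thesis
    by simp
qed

lemma sum_ambiguity_zero_frequency_nyquist:
  fixes m :: int and M N :: nat
  assumes nyquist: "\<And>k::int. (LINT t|lborel. a t * cnj (a (t - of_int k * (T / real M))))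
      = kdelta k / of_nat N"
    and "M \<ge> 1" and "\<bar>m\<bar> < int M" and "0 \<le> D"
  shows "(\<Sum>k\<in>{-D..D}. ambiguity a a (of_int m * (T / real M) - of_int k * T) 0)
      = kdelta m / of_nat N"
proof -
  have "of_int m * (T / real M) - of_int k * T = of_int (m - k * int M) * (T / real M)" for k
    using \<open>M \<ge> 1\<close> by (simp add: field_simps)
  then have "ambiguity a a (of_int m * (T / real M) - of_int k * T) 0
      = kdelta (m - k * int M) / of_nat N" for k
    by (simp only: ambiguity_zero_frequency nyquist)
  then show ?thesis
    using assms(3,4) by (simp add: sum_divide_distrib[symmetric] sum_kdelta_multiples)
qed

lemma ambiguity_ddop_cyc_ddop:
  assumes "T > 0" and a: "square_integrable a"
    and support: "\<And>t. \<bar>t\<bar> > Ta / 2 \<Longrightarrow> a t = 0"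
    and "\<bar>\<tau>\<bar> < T"
  shows "ambiguity (ddop_cyc a Ta T N) (ddop a T N) \<tau> \<nu>
      = (\<Sum>k\<in>{-\<lceil>Ta / T\<rceil>..\<lceil>Ta / T\<rceil>}. ambiguity a a (\<tau> - of_int k * T) \<nu>)
        * (\<Sum>j<N. exp (- \<i> * complex_of_real (2 * pi * \<nu> * (real j * T))))"
proof -
  define D where "D = \<lceil>Ta / T\<rceil>"
  define A where "A k = ambiguity a a (\<tau> - of_int k * T) \<nu>" for k
  define W where "W j = exp (- \<i> * complex_of_real (2 * pi * \<nu> * (real j * T)))" for j :: nat
  have A_outside: "A k = 0" if "\<bar>k\<bar> > D" for k
  proof -
    have "Ta \<le> of_int D * T"
      using \<open>T > 0\<close> by (simp add: D_def pos_divide_le_eq[symmetric])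
    moreover have "(of_int D + 1) * T \<le> \<bar>of_int k * T\<bar>"
      using that \<open>T > 0\<close> by (simp add: abs_mult mult_right_mono)
    ultimately have "\<bar>\<tau> - of_int k * T\<bar> > 2 * (Ta / 2)"
      using \<open>\<bar>\<tau>\<bar> < T\<close> by (simp add: algebra_simps)
    then show ?thesis
      unfolding A_def using support by (intro ambiguity_eq_0_if_supports_apart)
  qed
  have "ddop_cyc a Ta T N = (\<lambda>t. \<Sum>l\<in>{-D..int N - 1 + D}. a (t - of_int l * T))"
    by (simp add: ddop_cyc_def D_def Let_def fun_eq_iff)
  moreover have "ddop a T N = (\<lambda>t. \<Sum>j<N. a (t - real j * T))"
    by (simp add: ddop_def fun_eq_iff)
  ultimately have "ambiguity (ddop_cyc a Ta T N) (ddop a T N) \<tau> \<nu>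
      = (\<Sum>j<N. \<Sum>l\<in>{-D..int N - 1 + D}. W j * A (l - int j))"
    by (simp add: ambiguity_sum square_integrable_shift a ambiguity_shift A_def W_def algebra_simps)
  also have "\<dots> = (\<Sum>j<N. W j * (\<Sum>k\<in>{-D..D}. A k))"
    by (intro sum.cong refl) (auto simp: sum_distrib_left[symmetric] intro!: sum_shifted_window A_outside)
  also have "\<dots> = (\<Sum>k\<in>{-D..D}. A k) * (\<Sum>j<N. W j)"
    unfolding sum_distrib_right[symmetric] by (rule mult.commute)
  finally show ?thesis
    unfolding D_def A_def W_def .
qed

theorem lemma2:
  fixes a :: "real \<Rightarrow> complex" and T Ta :: real and M N :: nat
  assumes "T > 0" and "M \<ge> 1" and "N \<ge> 1" and "Ta > 0"
    and "square_integrable a"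
    and "\<And>t. \<bar>t\<bar> > Ta / 2 \<Longrightarrow> a t = 0"
    and "\<And>k::int. (LINT t|lborel. a t * cnj (a (t - real_of_int k * (T / real M))))
                    = kdelta k / of_nat N"
  shows "\<forall>m n :: int. \<bar>m\<bar> \<le> int M - 1 \<and> \<bar>n\<bar> \<le> int N - 1 \<longrightarrow>
           ambiguity (ddop_cyc a Ta T N) (ddop a T N)
             (real_of_int m * (T / real M)) (real_of_int n * (1 / (real N * T)))
           = kdelta m * kdelta n"
proof (intro allI impI)
  fix m n :: int
  assume "\<bar>m\<bar> \<le> int M - 1 \<and> \<bar>n\<bar> \<le> int N - 1"
  then have m: "\<bar>m\<bar> < int M" and n: "\<bar>n\<bar> < int N"
    by auto
  define \<tau> where "\<tau> = real_of_int m * (T / real M)"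
  define \<nu> where "\<nu> = real_of_int n * (1 / (real N * T))"
  have "\<bar>\<tau>\<bar> < T"
    using m \<open>T > 0\<close> by (simp add: \<tau>_def abs_mult field_simps)
  with assms(1,5,6) have "ambiguity (ddop_cyc a Ta T N) (ddop a T N) \<tau> \<nu>
      = (\<Sum>k\<in>{-\<lceil>Ta / T\<rceil>..\<lceil>Ta / T\<rceil>}. ambiguity a a (\<tau> - of_int k * T) \<nu>)
        * (\<Sum>j<N. exp (- \<i> * complex_of_real (2 * pi * \<nu> * (real j * T))))"
    by (rule ambiguity_ddop_cyc_ddop)
  moreover have "(\<Sum>j<N. exp (- \<i> * complex_of_real (2 * pi * \<nu> * (real j * T))))
      = of_nat N * kdelta n"
    unfolding \<nu>_def using \<open>T > 0\<close> n by (intro sum_exp_frequency_grid) auto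
  ultimately have factorization: "ambiguity (ddop_cyc a Ta T N) (ddop a T N) \<tau> \<nu>
      = (\<Sum>k\<in>{-\<lceil>Ta / T\<rceil>..\<lceil>Ta / T\<rceil>}. ambiguity a a (\<tau> - of_int k * T) \<nu>)
        * (of_nat N * kdelta n)"
    by (simp only:)
  have "0 \<le> \<lceil>Ta / T\<rceil>"
    using divide_pos_pos[OF \<open>Ta > 0\<close> \<open>T > 0\<close>] by (simp add: order_less_imp_le)
  with assms(7,2) m have "(\<Sum>k\<in>{-\<lceil>Ta / T\<rceil>..\<lceil>Ta / T\<rceil>}. ambiguity a a (\<tau> - of_int k * T) 0)
      = kdelta m / of_nat N"
    unfolding \<tau>_def by (rule sum_ambiguity_zero_frequency_nyquist)
  with \<open>N \<ge> 1\<close> show "ambiguity (ddop_cyc a Ta T N) (ddop a T N) \<tau> \<nu> = kdelta m * kdelta n"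
    unfolding factorization by (cases "n = 0") (simp_all add: \<nu>_def kdelta_def)
qed

end
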